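(* Let $(G,\delta)$ be a nilpotent $\mathbb Q$-scalable group of step $s$ that is generated as a group by $\{\delta_q(x_i):q\in\mathbb Q,1\le i\le r\}$ for some $x_1,\dots,x_r\in V_1(G)$. Then the abelian group $G^{(s)}$ is a $\mathbb Q$-vector space (with the group product as addition), where for $s=1$ the scalar multiplication is $\sigma_q=\delta_q$, and for $s\ge2$ the scalar multiplication is the well-defined map $\sigma_{n/m}(z):=\delta_m^{-1}\big(z^{n m^{s-1}}\big)$ ($n\in\mathbb Z$, $m\in\mathbb N$). Moreover, if $s\ge 2$ and $z=[x,w]\in G^{(s)}$ with $x\in V_1(G)$ and $w\in G^{(s-1)}$, then $\sigma_q(z)=[\delta_q(x),w]$ for all $q\in\mathbb Q$.
   Context: A $\mathbb Q$-scalable group is a group $G$ with a map $\delta\colon\mathbb Q\times G\to G$ such that $\delta_\lambda$ is an automorphism for $\lambda\ne0$, $\delta_\lambda\circ\delta_\mu=\delta_{\lambda\mu}$ for $\lambda,\mu\in\mathbb Q$, and $\delta_0\equiv e_G$. $V_1(G):=\{p:\delta_{t+s}(p)=\delta_t(p)\delta_s(p)\ \forall t,s\in\mathbb Q\}$. $[g,h]=ghg^{-1}h^{-1}$; $G^{(1)}=G$, $G^{(k)}=\langle[G,G^{(k-1)}]\rangle$; step $s$ means $G^{(s+1)}=\{e\}\ne G^{(s)}$. A $\mathbb Q$-vector space structure on an abelian group $G$ is a map $\sigma\colon\mathbb Q\times G\to G$ with $\sigma_q\sigma_p=\sigma_{qp}$, $\sigma_q(g)\sigma_p(g)=\sigma_{q+p}(g)$,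 $\sigma_1=\mathrm{id}$, $\sigma_q(g)\sigma_q(h)=\sigma_q(gh)$. *)

theory Defs
  imports "HOL-Algebra.Algebra"
begin

definition Q_scalable :: "('a, 'b) monoid_scheme \<Rightarrow> (rat \<Rightarrow> 'a \<Rightarrow> 'a) \<Rightarrow> bool" where
  "Q_scalable G \<delta> \<longleftrightarrow> group G
     \<and> (\<forall>a. a \<noteq> 0 \<longrightarrow> \<delta> a \<in> iso G G)
     \<and> (\<forall>a b. \<forall>x \<in> carrier G. \<delta> a (\<delta> b x) = \<delta> (a * b) x)
     \<and> (\<forall>x \<in> carrier G. \<delta> 0 x = \<one>\<^bsub>G\<^esub>)"

definition V1 :: "('a, 'b) monoid_scheme \<Rightarrow> (rat \<Rightarrow> 'a \<Rightarrow> 'a) \<Rightarrow> 'a set" where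
  "V1 G \<delta> = {p \<in> carrier G. \<forall>t s. \<delta> (t + s) p = \<delta> t p \<otimes>\<^bsub>G\<^esub> \<delta> s p}"

definition commutator :: "('a, 'b) monoid_scheme \<Rightarrow> 'a \<Rightarrow> 'a \<Rightarrow> 'a" where
  "commutator G g h = g \<otimes>\<^bsub>G\<^esub> h \<otimes>\<^bsub>G\<^esub> inv\<^bsub>G\<^esub> g \<otimes>\<^bsub>G\<^esub> inv\<^bsub>G\<^esub> h"

text \<open>Lower central series, indexed as in the paper: \<open>lcs G k = G^(k)\<close> for \<open>k \<ge> 1\<close>
  (index 0 is a junk value equal to the carrier).\<close>
fun lcs :: "('a, 'b) monoid_scheme \<Rightarrow> nat \<Rightarrow> 'a set" where
  "lcs G 0 = carrier G"
| "lcs G (Suc 0) = carrier G"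
| "lcs G (Suc (Suc k)) =
     generate G {commutator G g h | g h. g \<in> carrier G \<and> h \<in> lcs G (Suc k)}"

definition nilpotent_step :: "('a, 'b) monoid_scheme \<Rightarrow> nat \<Rightarrow> bool" where
  "nilpotent_step G s \<longleftrightarrow> 1 \<le> s \<and> lcs G (Suc s) = {\<one>\<^bsub>G\<^esub>} \<and> lcs G s \<noteq> {\<one>\<^bsub>G\<^esub>}"

definition Q_vector_space_structure ::
  "('a, 'b) monoid_scheme \<Rightarrow> 'a set \<Rightarrow> (rat \<Rightarrow> 'a \<Rightarrow> 'a) \<Rightarrow> bool" where
  "Q_vector_space_structure G H \<sigma> \<longleftrightarrow>
     (\<forall>q. \<forall>g \<in> H. \<sigma> q g \<in> H)
     \<and> (\<forall>q p. \<forall>g \<in> H. \<sigma> q (\<sigma> p g) = \<sigma> (q * p) g)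
     \<and> (\<forall>q p. \<forall>g \<in> H. \<sigma> q g \<otimes>\<^bsub>G\<^esub> \<sigma> p g = \<sigma> (q + p) g)
     \<and> (\<forall>g \<in> H. \<sigma> 1 g = g)
     \<and> (\<forall>q. \<forall>g \<in> H. \<forall>h \<in> H. \<sigma> q g \<otimes>\<^bsub>G\<^esub> \<sigma> q h = \<sigma> q (g \<otimes>\<^bsub>G\<^esub> h))"

definition sigma_raw :: "('a, 'b) monoid_scheme \<Rightarrow> (rat \<Rightarrow> 'a \<Rightarrow> 'a) \<Rightarrow> nat \<Rightarrow> int \<Rightarrow> int \<Rightarrow> 'a \<Rightarrow> 'a" where
  "sigma_raw G \<delta> s n m z =
     inv_into (carrier G) (\<delta> (of_int m)) (z [^]\<^bsub>G\<^esub> (n * m ^ (s - 1)))"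

definition sigma :: "('a, 'b) monoid_scheme \<Rightarrow> (rat \<Rightarrow> 'a \<Rightarrow> 'a) \<Rightarrow> nat \<Rightarrow> rat \<Rightarrow> 'a \<Rightarrow> 'a" where
  "sigma G \<delta> s q z =
     (if s = 1 then \<delta> q z
      else (case quotient_of q of (n, m) \<Rightarrow> sigma_raw G \<delta> s n m z))"

end

theory Submission
  imports Defs
begin

text \<open>
  The dilations act on the lower central series like powers: for a positive integer m and
  w in G^(k), delta_m w and w^(m^k) agree modulo G^(k+1). For k = 1 this holds on the
  generators, which lie in V1, and G/G^(2) is abelian. Modulo G^(k+2) the commutator [g, h]
  with h in G^(k) is multiplicative in g and in h, so on a generator a we get
  delta_m [a, h] = [a^m, delta_m h] = [a^m, h^(m^k)] = [a, h]^(m^(k+1)), and this propagates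
  to all of G^(k+1), which is generated by such commutators.

  On the central subgroup G^(s) this reads delta_m z = z^(m^s). As delta_m is injective, so are
  the positive power maps on G^(s), and delta_m^-1 (z^(n m^(s-1))) is the unique m-th root of
  z^n. Hence G^(s) is a uniquely divisible abelian group, sigma_(n/m) z is the unique u with
  u^m = z^n, and the vector space axioms as well as sigma_q [x, w] = [delta_q x, w] follow by
  comparing m-th powers.
\<close>

section \<open>Commutators and powers\<close>

context group
begin

lemma commutator_closed [simp]:
  "g \<in> carrier G \<Longrightarrow> h \<in> carrier G \<Longrightarrow> commutator G g h \<in> carrier G"
  by (simp add: commutator_def)

lemma commutator_eq_one_iff:
  assumes "g \<in> carrier G" "h \<in> carrier G"
  shows "commutator G g h = \<one> \<longleftrightarrow> g \<otimes> h = h \<otimes> g"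
proof -
  have "commutator G g h = (g \<otimes> h) \<otimes> inv (h \<otimes> g)"
    using assms by (simp add: commutator_def inv_mult_group m_assoc)
  then show ?thesis
    using assms by (metis inv_closed m_closed inv_solve_right l_one r_inv)
qed

lemma inv_cancel_left [simp]: "x \<in> carrier G \<Longrightarrow> y \<in> carrier G \<Longrightarrow> inv x \<otimes> (x \<otimes> y) = y"
  by (simp add: m_assoc [symmetric])

lemma conj_commuting:
  "a \<in> carrier G \<Longrightarrow> c \<in> carrier G \<Longrightarrow> a \<otimes> c = c \<otimes> a \<Longrightarrow> a \<otimes> c \<otimes> inv a = c"
  by (metis inv_closed m_assoc r_inv r_one)

lemma commutator_mult_left:
  "x \<in> carrier G \<Longrightarrow> y \<in> carrier G \<Longrightarrow> h \<in> carrier G \<Longrightarrow>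
    commutator G (x \<otimes> y) h = x \<otimes> commutator G y h \<otimes> inv x \<otimes> commutator G x h"
  unfolding commutator_def by (simp add: m_assoc inv_mult_group)

lemma commutator_mult_right:
  "g \<in> carrier G \<Longrightarrow> x \<in> carrier G \<Longrightarrow> y \<in> carrier G \<Longrightarrow>
    commutator G g (x \<otimes> y) = commutator G g x \<otimes> x \<otimes> commutator G g y \<otimes> inv x"
  unfolding commutator_def by (simp add: m_assoc inv_mult_group)

lemma int_pow_commute:
  assumes x: "x \<in> carrier G" and y: "y \<in> carrier G" and xy: "x \<otimes> y = y \<otimes> x"
  shows "x \<otimes> y [^] (i::int) = y [^] i \<otimes> x"
proof -
  have nat: "x \<otimes> y [^] n = y [^] n \<otimes> x" for n :: nat
    using group_commutes_pow[OF xy[symmetric] y x, of n] by (rule sym)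
  show ?thesis
  proof (cases "i \<ge> 0")
    case True
    then show ?thesis using nat[of "nat i"] by (simp only: pow_nat)
  next
    case False
    define a where "a = y [^] nat (- i)"
    have a: "a \<in> carrier G" "a \<otimes> x = x \<otimes> a"
      using y nat[symmetric] unfolding a_def by simp_all
    have "x \<otimes> inv a = inv a \<otimes> (a \<otimes> x) \<otimes> inv a"
      using x a(1) by (simp add: m_assoc)
    also have "\<dots> = inv a \<otimes> x"
      unfolding a(2) using x a(1) by (simp add: m_assoc)
    finally show ?thesis
      using False int_pow_neg_int[OF y, of "nat (- i)"] by (simp add: a_def)
  qed
qed

lemma commutator_int_pow_left:
  assumes g: "g \<in> carrier G" and h: "h \<in> carrier G"
    and comm: "g \<otimes> commutator G g h = commutator G g h \<otimes> g"
  shows "commutator G (g [^] (n::int)) h = commutator G g h [^] n"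
proof -
  define c where "c = commutator G g h"
  have c: "c \<in> carrier G" using g h by (simp add: c_def)
  have conj: "g \<otimes> c [^] i \<otimes> inv g = c [^] i" for i :: int
    using conj_commuting[OF g _ int_pow_commute[OF g c comm[folded c_def]]] c by simp
  have shift: "commutator G (g [^] (i + 1)) h = g \<otimes> commutator G (g [^] i) h \<otimes> inv g \<otimes> c"
    for i :: int
  proof -
    have "g [^] (i + 1) = g \<otimes> g [^] i"
      using int_pow_mult[OF g, of 1 i] g by (simp add: add.commute)
    then show ?thesis
      using g h commutator_mult_left[of g "g [^] i" h] by (simp add: c_def)
  qed
  have step: "commutator G (g [^] (i + 1)) h = c [^] (i + 1) \<longleftrightarrow> commutator G (g [^] i) h = c [^] i"
    for i :: int
  proof -
    have "c [^] (i + 1) = g \<otimes> c [^] i \<otimes> inv g \<otimes> c"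
      using c conj[of i] by (simp add: int_pow_mult)
    then have "commutator G (g [^] (i + 1)) h = c [^] (i + 1) \<longleftrightarrow>
        g \<otimes> commutator G (g [^] i) h \<otimes> inv g \<otimes> c = g \<otimes> c [^] i \<otimes> inv g \<otimes> c"
      by (simp only: shift)
    also have "\<dots> \<longleftrightarrow> commutator G (g [^] i) h = c [^] i"
      using g h c by (simp add: m_assoc)
    finally show ?thesis .
  qed
  show ?thesis
  proof (induction n rule: int_induct [where k = 0])
    case base
    show ?case using h by (simp add: commutator_def)
  next
    case (step1 i)
    then show ?case using step[of i] unfolding c_def by blast
  next
    case (step2 i)
    then show ?case using step[of "i - 1"] unfolding c_def by simp
  qed
qed

lemma subgroup_nat_pow_closed: "subgroup H G \<Longrightarrow> h \<in> H \<Longrightarrow> h [^] (n::nat) \<in> H"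
  using subgroup_int_pow_closed[of H h "int n"] by (simp add: int_pow_int)

lemma hom_eq_nat_pow_on_generate:
  assumes f: "group_hom G H f" and g: "group_hom G H g" and S: "S \<subseteq> carrier G"
    and central: "\<And>a b. a \<in> generate G S \<Longrightarrow> b \<in> carrier H \<Longrightarrow> g a \<otimes>\<^bsub>H\<^esub> b = b \<otimes>\<^bsub>H\<^esub> g a"
    and gens: "\<And>a. a \<in> S \<Longrightarrow> f a = g a [^]\<^bsub>H\<^esub> N"
    and w: "w \<in> generate G S"
  shows "f w = g w [^]\<^bsub>H\<^esub> (N::nat)"
proof -
  interpret H: group H using f by (rule group_hom.axioms(2))
  interpret f: group_hom G H f by (rule f)
  interpret g: group_hom G H g by (rule g)
  from w show ?thesis
  proof induction
    case (incl a)
    then show ?case by (rule gens)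
  next
    case (inv a)
    then show ?case using S gens[OF inv] by (auto simp: H.nat_pow_inv)
  next
    case (eng a b)
    have c: "a \<in> carrier G" "b \<in> carrier G" using eng.hyps generate_in_carrier[OF S] by blast+
    have "f (a \<otimes> b) = g a [^]\<^bsub>H\<^esub> N \<otimes>\<^bsub>H\<^esub> g b [^]\<^bsub>H\<^esub> N"
      using eng.IH c by simp
    also have "\<dots> = (g a \<otimes>\<^bsub>H\<^esub> g b) [^]\<^bsub>H\<^esub> N"
      using H.pow_mult_distrib[OF central[OF eng.hyps(1)]] c by simp
    finally show ?case using c by simp
  qed simp
qed

lemma int_pow_eq_if_roots:
  assumes z: "z \<in> carrier G" and u: "u \<in> carrier G" and v: "v \<in> carrier G"
    and m: "0 < m" and m': "0 < m'" and q: "(of_int n / of_int m :: rat) = of_int n' / of_int m'"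
    and uz: "u [^] m = z [^] n" and vz: "v [^] m' = z [^] n'"
  shows "u [^] (m * m') = v [^] (m * m')"
proof -
  have nn: "n * m' = n' * m"
    using q m m' by (simp add: frac_eq_eq) (metis of_int_eq_iff of_int_mult)
  have "u [^] (m * m') = z [^] (n * m')"
    using arg_cong[OF uz, of "\<lambda>x. x [^] m'"] u z by (simp add: int_pow_pow)
  also have "\<dots> = z [^] (n' * m)" by (simp add: nn)
  also have "\<dots> = v [^] (m * m')"
    using arg_cong[OF vz, of "\<lambda>x. x [^] m"] v z by (simp add: int_pow_pow mult.commute)
  finally show ?thesis .
qed

end

lemma (in group_hom) hom_commutator:
  "g \<in> carrier G \<Longrightarrow> k \<in> carrier G \<Longrightarrow> h (commutator G g k) = commutator H (h g) (h k)"
  by (simp add: commutator_def)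

lemma (in group_hom) group_hom_commutator_left:
  assumes u: "u \<in> carrier G"
    and central: "\<And>x z. x \<in> carrier G \<Longrightarrow> z \<in> carrier H \<Longrightarrow>
      z \<otimes>\<^bsub>H\<^esub> h (commutator G x u) = h (commutator G x u) \<otimes>\<^bsub>H\<^esub> z"
  shows "group_hom G H (\<lambda>x. h (commutator G x u))"
proof -
  have "h (commutator G (x \<otimes> y) u) = h (commutator G x u) \<otimes>\<^bsub>H\<^esub> h (commutator G y u)"
    if x: "x \<in> carrier G" and y: "y \<in> carrier G" for x y
  proof -
    have "h (commutator G (x \<otimes> y) u)
        = h x \<otimes>\<^bsub>H\<^esub> h (commutator G y u) \<otimes>\<^bsub>H\<^esub> inv\<^bsub>H\<^esub> h x \<otimes>\<^bsub>H\<^esub> h (commutator G x u)"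
      using x y u by (simp add: G.commutator_mult_left)
    also have "\<dots> = h (commutator G y u) \<otimes>\<^bsub>H\<^esub> h (commutator G x u)"
      using H.conj_commuting[OF _ _ central[OF y]] x y u by simp
    also have "\<dots> = h (commutator G x u) \<otimes>\<^bsub>H\<^esub> h (commutator G y u)"
      using x y u by (intro central) simp_all
    finally show ?thesis .
  qed
  then show ?thesis
    by (intro group_hom.intro group_hom_axioms.intro G.is_group H.is_group homI) (use u in simp_all)
qed

lemma (in group_hom) group_hom_commutator_right:
  assumes S: "subgroup S G" and g: "g \<in> carrier G"
    and central: "\<And>y z. y \<in> S \<Longrightarrow> z \<in> carrier H \<Longrightarrow>
      z \<otimes>\<^bsub>H\<^esub> h (commutator G g y) = h (commutator G g y) \<otimes>\<^bsub>H\<^esub> z"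
  shows "group_hom (G\<lparr>carrier := S\<rparr>) H (\<lambda>y. h (commutator G g y))"
proof -
  have "h (commutator G g (x \<otimes> y)) = h (commutator G g x) \<otimes>\<^bsub>H\<^esub> h (commutator G g y)"
    if x: "x \<in> S" and y: "y \<in> S" for x y
  proof -
    have c: "x \<in> carrier G" "y \<in> carrier G" using x y subgroup.subset[OF S] by auto
    have "h (commutator G g (x \<otimes> y))
        = h (commutator G g x) \<otimes>\<^bsub>H\<^esub> (h x \<otimes>\<^bsub>H\<^esub> h (commutator G g y) \<otimes>\<^bsub>H\<^esub> inv\<^bsub>H\<^esub> h x)"
      using g c by (simp add: G.commutator_mult_right H.m_assoc)
    also have "\<dots> = h (commutator G g x) \<otimes>\<^bsub>H\<^esub> h (commutator G g y)"
      using H.conj_commuting[OF _ _ central[OF y]] g c by simp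
    finally show ?thesis .
  qed
  then show ?thesis
    by (intro group_hom.intro group_hom_axioms.intro subgroup.subgroup_is_group[OF S G.is_group]
        H.is_group homI) (use g subgroup.subset[OF S] in auto)
qed

lemma group_hom_comp:
  "group_hom G H f \<Longrightarrow> group_hom H I g \<Longrightarrow> group_hom G I (g \<circ> f)"
  unfolding group_hom_def group_hom_axioms_def by (blast intro: hom_compose)

section \<open>The lower central series\<close>

context group
begin

lemma lcs_Suc_eq:
  "1 \<le> j \<Longrightarrow> lcs G (Suc j) = generate G {commutator G g h | g h. g \<in> carrier G \<and> h \<in> lcs G j}"
  by (cases j) auto

lemma lcs_induct [case_names carrier Suc]:
  assumes "P (carrier G)"
    and "\<And>j. 1 \<le> j \<Longrightarrow> P (lcs G j) \<Longrightarrow>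
      P (generate G {commutator G g h | g h. g \<in> carrier G \<and> h \<in> lcs G j})"
  shows "P (lcs G k)"
proof (induction k)
  case (Suc k)
  then show ?case using assms by (cases "k = 0") (auto simp: lcs_Suc_eq)
qed (simp add: assms(1))

lemma lcs_subset_carrier: "lcs G k \<subseteq> carrier G"
proof (induction rule: lcs_induct)
  case (Suc j)
  then have "{commutator G g h | g h. g \<in> carrier G \<and> h \<in> lcs G j} \<subseteq> carrier G"
    by auto
  then show ?case by (rule generate_incl)
qed simp

lemma lcs_carrier: "h \<in> lcs G k \<Longrightarrow> h \<in> carrier G"
  using lcs_subset_carrier by blast

lemma subgroup_lcs: "subgroup (lcs G k) G"
proof (induction rule: lcs_induct)
  case (Suc j)
  have "{commutator G g h | g h. g \<in> carrier G \<and> h \<in> lcs G j} \<subseteq> carrier G"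
    using lcs_carrier by auto
  then show ?case by (rule generate_is_subgroup)
qed (rule subgroup_self)

lemma commutator_in_lcs_Suc:
  "g \<in> carrier G \<Longrightarrow> h \<in> lcs G j \<Longrightarrow> commutator G g h \<in> lcs G (Suc j)"
proof (cases "j = 0")
  case False
  then show "g \<in> carrier G \<Longrightarrow> h \<in> lcs G j \<Longrightarrow> commutator G g h \<in> lcs G (Suc j)"
    by (auto simp: lcs_Suc_eq simp del: lcs.simps intro: generate.incl)
qed simp

lemma lcs_Suc_subset: "lcs G (Suc j) \<subseteq> lcs G j"
proof (induction j)
  case (Suc j)
  show ?case
  proof (cases "j = 0")
    case True
    then show ?thesis using lcs_subset_carrier[of 2] by (simp add: numeral_2_eq_2)
  next
    case False
    then have "{commutator G g h | g h. g \<in> carrier G \<and> h \<in> lcs G (Suc j)}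
        \<subseteq> {commutator G g h | g h. g \<in> carrier G \<and> h \<in> lcs G j}"
      using Suc.IH by blast
    then show ?thesis using False lcs_Suc_eq[of "Suc j"] lcs_Suc_eq[of j]
      by (simp del: lcs.simps add: mono_generate)
  qed
qed simp

lemma normal_lcs: "lcs G j \<lhd> G"
  unfolding normal_inv_iff
proof (intro conjI ballI subgroup_lcs)
  fix x h assume x: "x \<in> carrier G" and h: "h \<in> lcs G j"
  have hc: "h \<in> carrier G" using h lcs_subset_carrier by blast
  show "x \<otimes> h \<otimes> inv x \<in> lcs G j"
  proof -
    have "commutator G x h \<in> lcs G j"
      using commutator_in_lcs_Suc[OF x h] lcs_Suc_subset by blast
    moreover have "x \<otimes> h \<otimes> inv x = commutator G x h \<otimes> h"
      using x hc by (simp add: commutator_def m_assoc)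
    ultimately show ?thesis using h subgroup.m_closed[OF subgroup_lcs] by metis
  qed
qed

lemma lcs_endomorphism:
  assumes \<phi>: "group_hom G G \<phi>"
  shows "\<phi> ` lcs G j \<subseteq> lcs G j"
proof (induction rule: lcs_induct)
  case carrier
  then show ?case using group_hom.hom_closed[OF \<phi>] by auto
next
  case (Suc j)
  define S where "S = {commutator G g h | g h. g \<in> carrier G \<and> h \<in> lcs G j}"
  have S: "S \<subseteq> carrier G" using lcs_carrier unfolding S_def by auto
  have "\<phi> ` S \<subseteq> S"
  proof
    fix y assume "y \<in> \<phi> ` S"
    then obtain g h where "y = \<phi> (commutator G g h)" "g \<in> carrier G" "h \<in> lcs G j"
      unfolding S_def by blast
    then have "y = commutator G (\<phi> g) (\<phi> h)" "\<phi> g \<in> carrier G" "\<phi> h \<in> lcs G j"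
      using Suc.IH lcs_carrier group_hom.hom_closed[OF \<phi>]
      by (auto simp: group_hom.hom_commutator[OF \<phi>])
    then show "y \<in> S" unfolding S_def by blast
  qed
  then show ?case
    using group_hom.generate_img[OF \<phi> S] mono_generate unfolding S_def by blast
qed

lemma group_hom_FactGroup: "K \<lhd> G \<Longrightarrow> group_hom G (G Mod K) (\<lambda>a. K #> a)"
  by (simp add: group_hom.intro group_hom_axioms.intro is_group normal.factorgroup_is_group
      normal.r_coset_hom_Mod)

lemma FactGroup_central:
  assumes K: "K \<lhd> G" and u: "u \<in> carrier G"
    and comm: "\<And>x. x \<in> carrier G \<Longrightarrow> commutator G x u \<in> K"
    and y: "y \<in> carrier (G Mod K)"
  shows "y \<otimes>\<^bsub>G Mod K\<^esub> (K #> u) = (K #> u) \<otimes>\<^bsub>G Mod K\<^esub> y"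
proof -
  interpret Q: group "G Mod K" by (rule normal.factorgroup_is_group[OF K])
  interpret \<pi>: group_hom G "G Mod K" "\<lambda>a. K #> a" by (rule group_hom_FactGroup[OF K])
  obtain x where x: "x \<in> carrier G" "y = K #> x" using y by (auto simp: FactGroup_def RCOSETS_def)
  have "commutator (G Mod K) y (K #> u) = K #> commutator G x u"
    using x u by (simp add: \<pi>.hom_commutator)
  also have "\<dots> = \<one>\<^bsub>G Mod K\<^esub>"
    using comm[OF x(1)] K by (simp add: normal_imp_subgroup subgroup.rcos_const is_group)
  finally show ?thesis using Q.commutator_eq_one_iff y u by simp
qed

lemma lcs_FactGroup_central:
  "u \<in> lcs G k \<Longrightarrow> y \<in> carrier (G Mod lcs G (Suc k)) \<Longrightarrow>
    y \<otimes>\<^bsub>G Mod lcs G (Suc k)\<^esub> (lcs G (Suc k) #> u) = (lcs G (Suc k) #> u) \<otimes>\<^bsub>G Mod lcs G (Suc k)\<^esub> y"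
  by (rule FactGroup_central[OF normal_lcs lcs_carrier commutator_in_lcs_Suc])

lemma lcs_commutator_hom_left:
  assumes h: "h \<in> lcs G k"
  shows "group_hom G (G Mod lcs G (Suc (Suc k))) (\<lambda>g. lcs G (Suc (Suc k)) #> commutator G g h)"
  using group_hom.group_hom_commutator_left[OF group_hom_FactGroup[OF normal_lcs] lcs_carrier[OF h]]
    lcs_FactGroup_central[OF commutator_in_lcs_Suc[OF _ h]] by blast

lemma lcs_commutator_hom_right:
  assumes g: "g \<in> carrier G"
  shows "group_hom (G\<lparr>carrier := lcs G k\<rparr>) (G Mod lcs G (Suc (Suc k)))
    (\<lambda>h. lcs G (Suc (Suc k)) #> commutator G g h)"
  using group_hom.group_hom_commutator_right[OF group_hom_FactGroup[OF normal_lcs] subgroup_lcs g]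
    lcs_FactGroup_central[OF commutator_in_lcs_Suc[OF g]] by blast

lemma lcs_commutator_cong_right:
  assumes g: "g \<in> carrier G" and h: "h \<in> lcs G k" and h': "h' \<in> lcs G k"
    and eq: "lcs G (Suc k) #> h = lcs G (Suc k) #> h'"
  shows "lcs G (Suc (Suc k)) #> commutator G g h = lcs G (Suc (Suc k)) #> commutator G g h'"
proof -
  define K where "K = lcs G (Suc (Suc k))"
  interpret \<kappa>: group_hom "G\<lparr>carrier := lcs G k\<rparr>" "G Mod K" "\<lambda>h. K #> commutator G g h"
    using lcs_commutator_hom_right[OF g] unfolding K_def .
  have hc: "h \<in> carrier G" "h' \<in> carrier G" using h h' lcs_carrier by auto
  define c where "c = h \<otimes> inv h'"
  have cL: "c \<in> lcs G (Suc k)"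
    using subgroup.rcos_module_imp[OF subgroup_lcs is_group hc(2)] rcos_self[OF hc(1) subgroup_lcs[of "Suc k"]] eq
    unfolding c_def by simp
  have "K #> commutator G g c = \<one>\<^bsub>G Mod K\<^esub>"
    using subgroup.rcos_const[OF subgroup_lcs is_group commutator_in_lcs_Suc[OF g cL]]
    unfolding K_def by simp
  moreover have "h = c \<otimes> h'" using hc unfolding c_def by (simp add: m_assoc)
  moreover have "c \<in> lcs G k" using cL lcs_Suc_subset by blast
  ultimately show ?thesis
    using \<kappa>.hom_mult[of c h'] h' \<kappa>.H.l_one \<kappa>.hom_closed unfolding K_def by simp
qed

lemma endomorphism_rcos_eq_pow_on_generate:
  assumes \<phi>: "group_hom G G \<phi>" and K: "K \<lhd> G" and S: "S \<subseteq> carrier G"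
    and central: "\<And>a b. a \<in> generate G S \<Longrightarrow> b \<in> carrier (G Mod K) \<Longrightarrow>
      (K #> a) \<otimes>\<^bsub>G Mod K\<^esub> b = b \<otimes>\<^bsub>G Mod K\<^esub> (K #> a)"
    and gens: "\<And>a. a \<in> S \<Longrightarrow> K #> \<phi> a = (K #> a) [^]\<^bsub>G Mod K\<^esub> N"
    and w: "w \<in> generate G S"
  shows "K #> \<phi> w = K #> w [^] (N::nat)"
proof -
  interpret \<pi>: group_hom G "G Mod K" "\<lambda>a. K #> a" by (rule group_hom_FactGroup[OF K])
  have "((\<lambda>a. K #> a) \<circ> \<phi>) w = (K #> w) [^]\<^bsub>G Mod K\<^esub> N"
  proof (rule hom_eq_nat_pow_on_generate[OF group_hom_comp[OF \<phi> \<pi>.group_hom_axioms]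
        \<pi>.group_hom_axioms S _ _ w])
    show "(K #> a) \<otimes>\<^bsub>G Mod K\<^esub> b = b \<otimes>\<^bsub>G Mod K\<^esub> (K #> a)"
      if "a \<in> generate G S" "b \<in> carrier (G Mod K)" for a b
      using central that .
    show "((\<lambda>a. K #> a) \<circ> \<phi>) a = (K #> a) [^]\<^bsub>G Mod K\<^esub> N" if "a \<in> S" for a
      unfolding comp_apply by (rule gens[OF that])
  qed
  moreover have "w \<in> carrier G" using w generate_in_carrier[OF S] by blast
  ultimately show ?thesis using \<pi>.hom_nat_pow[of w N] by simp
qed

end

section \<open>Uniquely divisible abelian subgroups\<close>

text \<open>\<sigma> q z plays the role of z^q: for q = n/m in lowest terms it is an m-th root of z^n.\<close>

locale rat_pow_subgroup = group G for G (structure) +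
  fixes H :: "'a set" and \<sigma> :: "rat \<Rightarrow> 'a \<Rightarrow> 'a"
  assumes subgroup_H: "subgroup H G"
    and comm: "\<And>g h. g \<in> H \<Longrightarrow> h \<in> H \<Longrightarrow> g \<otimes> h = h \<otimes> g"
    and int_pow_inj: "\<And>a b k. a \<in> H \<Longrightarrow> b \<in> H \<Longrightarrow> (0::int) < k \<Longrightarrow> a [^] k = b [^] k \<Longrightarrow> a = b"
    and root: "\<And>q z. z \<in> H \<Longrightarrow>
      \<sigma> q z \<in> H \<and> \<sigma> q z [^] snd (quotient_of q) = z [^] fst (quotient_of q)"
begin

lemma mem_carrier: "z \<in> H \<Longrightarrow> z \<in> carrier G"
  by (rule subgroup.mem_carrier[OF subgroup_H])

lemma root_quotient_of:
  assumes "z \<in> H" and "quotient_of q = (n, m)"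
  shows "0 < m" "q = of_int n / of_int m" "\<sigma> q z \<in> H" "\<sigma> q z [^] m = z [^] n"
  using root[OF assms(1), of q] assms quotient_of_denom_pos quotient_of_div by simp_all

lemma rat_pow_eqI:
  assumes z: "z \<in> H" and u: "u \<in> H" and m: "0 < m" and q: "q = of_int n / of_int m"
    and uz: "u [^] m = z [^] n"
  shows "\<sigma> q z = u"
proof -
  obtain n0 m0 where qo: "quotient_of q = (n0, m0)" by fastforce
  note r = root_quotient_of[OF z qo]
  show ?thesis
  proof (rule int_pow_inj[OF r(3) u])
    show "0 < m0 * m" using r(1) m by simp
    show "\<sigma> q z [^] (m0 * m) = u [^] (m0 * m)"
      by (rule int_pow_eq_if_roots[OF mem_carrier[OF z] mem_carrier[OF r(3)] mem_carrier[OF u] r(1) m _ r(4) uz])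
        (simp only: r(2) [symmetric] q [symmetric])
  qed
qed

lemma rat_pow_rat_pow: "z \<in> H \<Longrightarrow> \<sigma> q (\<sigma> p z) = \<sigma> (q * p) z"
proof -
  assume z: "z \<in> H"
  obtain nq mq np mp where qo: "quotient_of q = (nq, mq)" and po: "quotient_of p = (np, mp)"
    by fastforce
  define u where "u = \<sigma> p z"
  define v where "v = \<sigma> q u"
  note u = root_quotient_of[OF z po, folded u_def]
  note v = root_quotient_of[OF u(3) qo, folded v_def]
  have "v [^] (mq * mp) = (v [^] mq) [^] mp"
    using mem_carrier[OF v(3)] by (simp add: int_pow_pow)
  also have "\<dots> = (u [^] mp) [^] nq"
    using mem_carrier[OF u(3)] v(4) by (simp add: int_pow_pow mult.commute)
  also have "\<dots> = z [^] (nq * np)"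
    using mem_carrier[OF z] u(4) by (simp add: int_pow_pow mult.commute)
  finally have "\<sigma> (q * p) z = v"
    using rat_pow_eqI[OF z v(3), of "mq * mp" "q * p" "nq * np"] u(1,2) v(1,2) by simp
  then show ?thesis unfolding u_def v_def by simp
qed

lemma rat_pow_add: "z \<in> H \<Longrightarrow> \<sigma> q z \<otimes> \<sigma> p z = \<sigma> (q + p) z"
proof -
  assume z: "z \<in> H"
  obtain nq mq np mp where qo: "quotient_of q = (nq, mq)" and po: "quotient_of p = (np, mp)"
    by fastforce
  define u where "u = \<sigma> q z"
  define v where "v = \<sigma> p z"
  note u = root_quotient_of[OF z qo, folded u_def]
  note v = root_quotient_of[OF z po, folded v_def]
  have c: "z \<in> carrier G" "u \<in> carrier G" "v \<in> carrier G" using z u(3) v(3) mem_carrier by auto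
  have "(u \<otimes> v) [^] (mq * mp) = (u [^] mq) [^] mp \<otimes> (v [^] mp) [^] mq"
    using c int_pow_mult_distrib[OF comm[OF u(3) v(3)]] by (simp add: int_pow_pow mult.commute)
  also have "\<dots> = z [^] (nq * mp + np * mq)"
    using c u(4) v(4) by (simp add: int_pow_pow int_pow_mult)
  finally have e: "(u \<otimes> v) [^] (mq * mp) = z [^] (nq * mp + np * mq)" .
  have "q + p = of_int (nq * mp + np * mq) / of_int (mq * mp)"
    using u(1,2) v(1,2) by (simp add: field_simps)
  then have "\<sigma> (q + p) z = u \<otimes> v"
    using rat_pow_eqI[OF z subgroup.m_closed[OF subgroup_H u(3) v(3)] _ _ e] u(1) v(1) by simp
  then show ?thesis unfolding u_def v_def by simp
qed

lemma rat_pow_mult_distrib: "g \<in> H \<Longrightarrow> h \<in> H \<Longrightarrow> \<sigma> q g \<otimes> \<sigma> q h = \<sigma> q (g \<otimes> h)"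
proof -
  assume g: "g \<in> H" and h: "h \<in> H"
  obtain n m where qo: "quotient_of q = (n, m)" by fastforce
  define u where "u = \<sigma> q g"
  define v where "v = \<sigma> q h"
  note u = root_quotient_of[OF g qo, folded u_def]
  note v = root_quotient_of[OF h qo, folded v_def]
  have "(u \<otimes> v) [^] m = (g \<otimes> h) [^] n"
    using u(4) v(4) mem_carrier[OF g] mem_carrier[OF h] mem_carrier[OF u(3)] mem_carrier[OF v(3)]
      int_pow_mult_distrib[OF comm[OF u(3) v(3)]] int_pow_mult_distrib[OF comm[OF g h]]
    by simp
  then have "\<sigma> q (g \<otimes> h) = u \<otimes> v"
    using rat_pow_eqI[OF subgroup.m_closed[OF subgroup_H g h] subgroup.m_closed[OF subgroup_H u(3) v(3)] u(1,2)]
    by simp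
  then show ?thesis unfolding u_def v_def by simp
qed

lemma rat_pow_one: "z \<in> H \<Longrightarrow> \<sigma> 1 z = z"
  using rat_pow_eqI[of z z 1 1 1] mem_carrier by simp

lemma Q_vector_space_structure: "Q_vector_space_structure G H \<sigma>"
  unfolding Q_vector_space_structure_def
  by (intro conjI allI ballI) (simp_all add: root rat_pow_rat_pow rat_pow_add rat_pow_one rat_pow_mult_distrib)

end

section \<open>\<rat>-scalable groups\<close>

locale Q_scalable_group = group G for G (structure) +
  fixes \<delta> :: "rat \<Rightarrow> 'a \<Rightarrow> 'a"
  assumes Q_scalable: "Q_scalable G \<delta>"
begin

lemma dilation_iso: "q \<noteq> 0 \<Longrightarrow> \<delta> q \<in> iso G G"
  using Q_scalable unfolding Q_scalable_def by blast

lemma dilation_hom: "q \<noteq> 0 \<Longrightarrow> group_hom G G (\<delta> q)"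
  using dilation_iso unfolding iso_def
  by (blast intro: group_hom.intro group_hom_axioms.intro is_group)

lemma dilation_inj: "q \<noteq> 0 \<Longrightarrow> inj_on (\<delta> q) (carrier G)"
  using dilation_iso unfolding iso_def bij_betw_def by blast

lemma dilation_dilation: "x \<in> carrier G \<Longrightarrow> \<delta> p (\<delta> q x) = \<delta> (p * q) x"
  using Q_scalable unfolding Q_scalable_def by blast

lemma dilation_zero: "x \<in> carrier G \<Longrightarrow> \<delta> 0 x = \<one>"
  using Q_scalable unfolding Q_scalable_def by blast

lemma dilation_closed [simp]: "x \<in> carrier G \<Longrightarrow> \<delta> q x \<in> carrier G"
  by (cases "q = 0") (auto simp: dilation_zero group_hom.hom_closed[OF dilation_hom])

lemma dilation_mult: "x \<in> carrier G \<Longrightarrow> y \<in> carrier G \<Longrightarrow> \<delta> q (x \<otimes> y) = \<delta> q x \<otimes> \<delta> q y"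
  by (cases "q = 0") (auto simp: dilation_zero group_hom.hom_mult[OF dilation_hom])

lemma dilation_inv: "x \<in> carrier G \<Longrightarrow> \<delta> q (inv x) = inv (\<delta> q x)"
  by (cases "q = 0") (auto simp: dilation_zero group_hom.hom_inv[OF dilation_hom])

lemma dilation_one [simp]: "\<delta> q \<one> = \<one>"
  using dilation_mult[of \<one> \<one> q] by simp

lemma dilation_by_one [simp]: "x \<in> carrier G \<Longrightarrow> \<delta> 1 x = x"
  using inj_onD[OF dilation_inj, of 1 "\<delta> 1 x" x] dilation_dilation[of x 1 1] by simp

lemma V1_carrier: "p \<in> V1 G \<delta> \<Longrightarrow> p \<in> carrier G"
  unfolding V1_def by blast

lemma V1_dilation_add: "p \<in> V1 G \<delta> \<Longrightarrow> \<delta> (t + r) p = \<delta> t p \<otimes> \<delta> r p"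
  unfolding V1_def by blast

lemma dilation_in_V1: "p \<in> V1 G \<delta> \<Longrightarrow> \<delta> q p \<in> V1 G \<delta>"
  using V1_dilation_add[of p "t * q" "r * q" for t r] V1_carrier[of p]
  unfolding V1_def by (simp add: dilation_dilation distrib_right)

lemma V1_dilation_of_int: "p \<in> V1 G \<delta> \<Longrightarrow> \<delta> (of_int n) p = p [^] n"
proof (induction n rule: int_induct [where k = 0])
  case base
  then show ?case by (simp add: V1_carrier dilation_zero)
next
  case (step1 i)
  then show ?case
    using V1_dilation_add[OF step1.prems, of "of_int i" 1] V1_carrier[OF step1.prems]
    by (simp add: int_pow_mult)
next
  case (step2 i)
  have p: "p \<in> carrier G" using V1_carrier[OF step2.prems] .
  have "p [^] i = \<delta> (of_int (i - 1)) p \<otimes> p"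
    using V1_dilation_add[OF step2.prems, of "of_int (i - 1)" 1] step2 p by simp
  then show ?case using p by (simp add: int_pow_diff inv_solve_right)
qed

lemma V1_dilation_of_nat: "p \<in> V1 G \<delta> \<Longrightarrow> \<delta> (of_nat n) p = p [^] n"
  using V1_dilation_of_int[of p "int n"] by (simp add: int_pow_int)

lemma subgroup_V1_if_abelian:
  assumes comm: "\<And>g h. g \<in> carrier G \<Longrightarrow> h \<in> carrier G \<Longrightarrow> g \<otimes> h = h \<otimes> g"
  shows "subgroup (V1 G \<delta>) G"
proof -
  interpret comm_group G by (rule group_comm_groupI) (use comm in auto)
  show ?thesis
  proof (rule subgroupI)
    show "V1 G \<delta> \<subseteq> carrier G" using V1_carrier by blast
    have "\<one> \<in> V1 G \<delta>" by (simp add: V1_def)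
    then show "V1 G \<delta> \<noteq> {}" by blast
  next
    fix a assume a: "a \<in> V1 G \<delta>"
    have ac: "a \<in> carrier G" using a by (rule V1_carrier)
    show "inv a \<in> V1 G \<delta>"
      unfolding V1_def
    proof (intro CollectI conjI allI)
      fix t r
      show "\<delta> (t + r) (inv a) = \<delta> t (inv a) \<otimes> \<delta> r (inv a)"
        using ac by (simp add: dilation_inv V1_dilation_add[OF a] inv_mult)
    qed (use ac in simp)
  next
    fix a b assume a: "a \<in> V1 G \<delta>" and b: "b \<in> V1 G \<delta>"
    have ac: "a \<in> carrier G" "b \<in> carrier G" using a b by (simp_all add: V1_carrier)
    show "a \<otimes> b \<in> V1 G \<delta>"
      unfolding V1_def
    proof (intro CollectI conjI allI)
      fix t r
      show "\<delta> (t + r) (a \<otimes> b) = \<delta> t (a \<otimes> b) \<otimes> \<delta> r (a \<otimes> b)"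
        using ac by (simp add: dilation_mult V1_dilation_add[OF a] V1_dilation_add[OF b] m_ac)
    qed (use ac in simp)
  qed
qed

end

locale generated_Q_scalable_group = Q_scalable_group +
  fixes gens :: "'a set"
  assumes gens_V1: "gens \<subseteq> V1 G \<delta>"
    and generate_gens: "generate G gens = carrier G"
begin

lemma gens_carrier: "gens \<subseteq> carrier G"
  using gens_V1 V1_carrier by blast

lemma carrier_V1_if_abelian:
  assumes comm: "\<And>g h. g \<in> carrier G \<Longrightarrow> h \<in> carrier G \<Longrightarrow> g \<otimes> h = h \<otimes> g"
  shows "carrier G \<subseteq> V1 G \<delta>"
  using generate_subgroup_incl[OF gens_V1 subgroup_V1_if_abelian[OF comm]] by (simp add: generate_gens)

lemma dilation_lcs_2:
  assumes m: "0 < m" and w: "w \<in> carrier G"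
  shows "lcs G 2 #> \<delta> (of_nat m) w = lcs G 2 #> w [^] m"
proof -
  have "lcs G (Suc 1) #> \<delta> (of_nat m) w = lcs G (Suc 1) #> w [^] m"
  proof (rule endomorphism_rcos_eq_pow_on_generate[OF dilation_hom normal_lcs gens_carrier])
    interpret \<pi>: group_hom G "G Mod lcs G (Suc 1)" "\<lambda>a. lcs G (Suc 1) #> a"
      by (rule group_hom_FactGroup[OF normal_lcs])
    show "lcs G (Suc 1) #> \<delta> (of_nat m) a = (lcs G (Suc 1) #> a) [^]\<^bsub>G Mod lcs G (Suc 1)\<^esub> m"
      if "a \<in> gens" for a
      using \<pi>.hom_nat_pow[of a m] V1_dilation_of_nat[of a m] that gens_V1 gens_carrier
      by (simp only: subset_iff)
  qed (use m w lcs_FactGroup_central[of _ 1] generate_in_carrier[OF gens_carrier] in \<open>auto simp: generate_gens\<close>)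
  then show ?thesis by (simp add: numeral_2_eq_2)
qed

lemma dilation_commutator_congruence_V1:
  assumes m: "0 < m"
    and IH: "\<And>w. w \<in> lcs G k \<Longrightarrow>
      lcs G (Suc k) #> \<delta> (of_nat m) w = lcs G (Suc k) #> w [^] (m ^ k)"
    and h: "h \<in> lcs G k" and a: "a \<in> V1 G \<delta>"
  shows "lcs G (Suc (Suc k)) #> commutator G (\<delta> (of_nat m) a) (\<delta> (of_nat m) h)
    = (lcs G (Suc (Suc k)) #> commutator G a h) [^]\<^bsub>G Mod lcs G (Suc (Suc k))\<^esub> (m ^ Suc k)"
proof -
  define K where "K = lcs G (Suc (Suc k))"
  interpret Q: group "G Mod K" unfolding K_def by (rule normal.factorgroup_is_group[OF normal_lcs])
  have ac: "a \<in> carrier G" using a by (rule V1_carrier)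
  have "(of_nat m :: rat) \<noteq> 0" using m by simp
  then have dh: "\<delta> (of_nat m) h \<in> lcs G k" using lcs_endomorphism[OF dilation_hom] h by blast
  have hM: "h [^] (m ^ k) \<in> lcs G k" using subgroup_nat_pow_closed[OF subgroup_lcs h] .
  note left = lcs_commutator_hom_left[of _ k, folded K_def]
  note right = lcs_commutator_hom_right[OF ac, of k, folded K_def]
  have "K #> commutator G (\<delta> (of_nat m) a) (\<delta> (of_nat m) h) = K #> commutator G (a [^] m) (h [^] (m ^ k))"
    using lcs_commutator_cong_right[OF _ dh hM IH[OF h]] ac
    unfolding K_def V1_dilation_of_nat[OF a] by simp
  also have "\<dots> = (K #> commutator G a (h [^] (m ^ k))) [^]\<^bsub>G Mod K\<^esub> m"
    using group_hom.hom_nat_pow[OF left[OF hM] ac] .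
  also have "K #> commutator G a (h [^] (m ^ k)) = (K #> commutator G a h) [^]\<^bsub>G Mod K\<^esub> (m ^ k)"
    using group_hom.hom_nat_pow[OF right, of h "m ^ k"] h by (simp flip: nat_pow_consistent)
  also have "((K #> commutator G a h) [^]\<^bsub>G Mod K\<^esub> (m ^ k)) [^]\<^bsub>G Mod K\<^esub> m
      = (K #> commutator G a h) [^]\<^bsub>G Mod K\<^esub> (m ^ Suc k)"
    using group_hom.hom_closed[OF left[OF h] ac] by (simp add: Q.nat_pow_pow mult.commute)
  finally show ?thesis unfolding K_def .
qed

lemma dilation_commutator_congruence:
  assumes m: "0 < m"
    and IH: "\<And>w. w \<in> lcs G k \<Longrightarrow>
      lcs G (Suc k) #> \<delta> (of_nat m) w = lcs G (Suc k) #> w [^] (m ^ k)"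
    and h: "h \<in> lcs G k" and g: "g \<in> carrier G"
  shows "lcs G (Suc (Suc k)) #> \<delta> (of_nat m) (commutator G g h)
    = (lcs G (Suc (Suc k)) #> commutator G g h) [^]\<^bsub>G Mod lcs G (Suc (Suc k))\<^esub> (m ^ Suc k)"
proof -
  define K where "K = lcs G (Suc (Suc k))"
  define d where "d = \<delta> (of_nat m)"
  have d: "group_hom G G d" unfolding d_def using m by (simp add: dilation_hom)
  have dh: "d h \<in> lcs G k" using lcs_endomorphism[OF d] h by blast
  note left = lcs_commutator_hom_left[of _ k, folded K_def]
  have "K #> d (commutator G g h) = ((\<lambda>x. K #> commutator G x (d h)) \<circ> d) g"
    using g lcs_carrier[OF h] by (simp add: group_hom.hom_commutator[OF d])
  also have "\<dots> = (K #> commutator G g h) [^]\<^bsub>G Mod K\<^esub> (m ^ Suc k)"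
  proof (rule hom_eq_nat_pow_on_generate[OF group_hom_comp[OF d left[OF dh]] left[OF h] gens_carrier])
    show "(K #> commutator G a h) \<otimes>\<^bsub>G Mod K\<^esub> b = b \<otimes>\<^bsub>G Mod K\<^esub> (K #> commutator G a h)"
      if "a \<in> generate G gens" "b \<in> carrier (G Mod K)" for a b
      using lcs_FactGroup_central[OF commutator_in_lcs_Suc[OF _ h], of a b] that
      unfolding K_def generate_gens by simp
    show "((\<lambda>x. K #> commutator G x (d h)) \<circ> d) a = (K #> commutator G a h) [^]\<^bsub>G Mod K\<^esub> (m ^ Suc k)"
      if "a \<in> gens" for a
      using dilation_commutator_congruence_V1[OF m IH h] that gens_V1
      unfolding K_def d_def comp_apply by blast
  qed (use g generate_gens in simp)
  finally show ?thesis unfolding K_def d_def .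
qed

lemma dilation_lcs_congruence:
  assumes k: "1 \<le> k" and m: "0 < m" and w: "w \<in> lcs G k"
  shows "lcs G (Suc k) #> \<delta> (of_nat m) w = lcs G (Suc k) #> w [^] (m ^ k)"
  using k w
proof (induction k arbitrary: w rule: nat_induct_at_least)
  case base
  then show ?case using dilation_lcs_2[OF m] by (simp add: numeral_2_eq_2)
next
  case (Suc k)
  define S where "S = {commutator G g h | g h. g \<in> carrier G \<and> h \<in> lcs G k}"
  have S: "S \<subseteq> carrier G" using lcs_carrier unfolding S_def by auto
  have lcs_S: "lcs G (Suc k) = generate G S" unfolding S_def using lcs_Suc_eq[OF Suc.hyps] .
  have d: "group_hom G G (\<delta> (of_nat m))" using m by (simp add: dilation_hom)
  show ?case
  proof (rule endomorphism_rcos_eq_pow_on_generate[OF d normal_lcs S])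
    show "(lcs G (Suc (Suc k)) #> a) \<otimes>\<^bsub>G Mod lcs G (Suc (Suc k))\<^esub> b
        = b \<otimes>\<^bsub>G Mod lcs G (Suc (Suc k))\<^esub> (lcs G (Suc (Suc k)) #> a)"
      if "a \<in> generate G S" "b \<in> carrier (G Mod lcs G (Suc (Suc k)))" for a b
      using lcs_FactGroup_central[of a "Suc k" b] that unfolding lcs_S by simp
    show "lcs G (Suc (Suc k)) #> \<delta> (of_nat m) a
        = (lcs G (Suc (Suc k)) #> a) [^]\<^bsub>G Mod lcs G (Suc (Suc k))\<^esub> m ^ Suc k"
      if "a \<in> S" for a
      using that dilation_commutator_congruence[OF m Suc.IH] unfolding S_def by blast
  qed (use Suc.prems lcs_S in simp)
qed

end

locale nilpotent_Q_scalable_group = generated_Q_scalable_group +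
  fixes s :: nat
  assumes nilpotent: "nilpotent_step G s"
begin

lemma step_pos: "1 \<le> s"
  using nilpotent unfolding nilpotent_step_def by blast

lemma lcs_Suc_step: "lcs G (Suc s) = {\<one>}"
  using nilpotent unfolding nilpotent_step_def by blast

lemma lcs_step_central: "g \<in> carrier G \<Longrightarrow> z \<in> lcs G s \<Longrightarrow> g \<otimes> z = z \<otimes> g"
  using commutator_in_lcs_Suc[of g z s] commutator_eq_one_iff[OF _ lcs_carrier] lcs_Suc_step by auto

lemma comm_group_lcs_step: "comm_group (G\<lparr>carrier := lcs G s\<rparr>)"
proof -
  interpret H: group "G\<lparr>carrier := lcs G s\<rparr>"
    by (rule subgroup.subgroup_is_group[OF subgroup_lcs is_group])
  show ?thesis
    by (rule H.group_comm_groupI) (use lcs_step_central lcs_carrier in simp)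
qed

lemma dilation_lcs_step:
  assumes m: "(0::int) < m" and z: "z \<in> lcs G s"
  shows "\<delta> (of_int m) z = z [^] (m ^ s)"
proof -
  have "{\<one>} #> \<delta> (of_nat (nat m)) z = {\<one>} #> z [^] (nat m ^ s)"
    using dilation_lcs_congruence[OF step_pos _ z, of "nat m"] m lcs_Suc_step by simp
  then show ?thesis
    using m lcs_carrier[OF z] by (simp add: r_coset_def int_pow_int [symmetric])
qed

lemma lcs_step_int_pow_inj:
  assumes u: "u \<in> lcs G s" and v: "v \<in> lcs G s" and k: "(0::int) < k"
    and eq: "u [^] k = v [^] k"
  shows "u = v"
proof -
  have ks: "k ^ s = k * k ^ (s - 1)" using step_pos by (cases s) auto
  have c: "u \<in> carrier G" "v \<in> carrier G" using u v lcs_carrier by auto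
  have "\<delta> (of_int k) u = (u [^] k) [^] (k ^ (s - 1))"
    using dilation_lcs_step[OF k u] c by (simp add: ks int_pow_pow)
  also have "\<dots> = \<delta> (of_int k) v"
    using dilation_lcs_step[OF k v] c eq by (simp add: ks int_pow_pow)
  finally have "\<delta> (of_int k) u = \<delta> (of_int k) v" .
  from inj_onD[OF dilation_inj, OF _ this c] k show ?thesis by simp
qed

lemma sigma_raw_root:
  assumes m: "(0::int) < m" and z: "z \<in> lcs G s"
  shows "sigma_raw G \<delta> s n m z \<in> lcs G s \<and> sigma_raw G \<delta> s n m z [^] m = z [^] n"
proof -
  define y where "y = z [^] (n * m ^ (s - 1))"
  define u where "u = \<delta> (1 / of_int m) y"
  have y: "y \<in> lcs G s" unfolding y_def using subgroup_int_pow_closed[OF subgroup_lcs z] .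
  have "(1 / of_int m :: rat) \<noteq> 0" using m by simp
  then have u: "u \<in> lcs G s" unfolding u_def using lcs_endomorphism[OF dilation_hom] y by blast
  have c: "z \<in> carrier G" "y \<in> carrier G" "u \<in> carrier G" using z y u lcs_carrier by auto
  have du: "\<delta> (of_int m) u = y" unfolding u_def using c m by (simp add: dilation_dilation)
  have "sigma_raw G \<delta> s n m z = u"
    unfolding sigma_raw_def y_def [symmetric] du [symmetric]
    using inv_into_f_f[OF dilation_inj c(3)] m by simp
  moreover have "u [^] m = z [^] n"
  proof (rule lcs_step_int_pow_inj)
    show "u [^] m \<in> lcs G s" "z [^] n \<in> lcs G s"
      using subgroup_int_pow_closed[OF subgroup_lcs] u z by auto
    show "(0::int) < m ^ (s - 1)" using m by simp
    have "(u [^] m) [^] (m ^ (s - 1)) = \<delta> (of_int m) u"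
      using dilation_lcs_step[OF m u] c step_pos
      by (cases s) (simp_all add: int_pow_pow)
    then show "(u [^] m) [^] (m ^ (s - 1)) = (z [^] n) [^] (m ^ (s - 1))"
      using du c by (simp add: y_def int_pow_pow)
  qed
  ultimately show ?thesis using u by simp
qed

lemma sigma_root:
  assumes z: "z \<in> lcs G s"
  shows "sigma G \<delta> s q z \<in> lcs G s
    \<and> sigma G \<delta> s q z [^] snd (quotient_of q) = z [^] fst (quotient_of q)"
proof -
  obtain n m where qo: "quotient_of q = (n, m)" by fastforce
  have m: "0 < m" and q: "q = of_int n / of_int m"
    using quotient_of_denom_pos[OF qo] quotient_of_div[OF qo] by auto
  show ?thesis
  proof (cases "s = 1")
    case True
    then have carrier: "lcs G s = carrier G" by simp
    have "carrier G \<subseteq> V1 G \<delta>"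
      by (rule carrier_V1_if_abelian) (use lcs_step_central carrier in blast)
    then have V: "z \<in> V1 G \<delta>" "\<delta> q z \<in> V1 G \<delta>" using z carrier dilation_in_V1 by auto
    have "\<delta> q z [^] m = \<delta> (of_int n) z"
      using V1_dilation_of_int[OF V(2), of m, symmetric] V1_carrier[OF V(1)] m
      by (simp add: dilation_dilation q)
    then show ?thesis
      using True z carrier qo V1_dilation_of_int[OF V(1)] by (simp add: sigma_def)
  next
    case False
    then show ?thesis using sigma_raw_root[OF m z, of n] qo by (simp add: sigma_def)
  qed
qed

sublocale lcs_step: rat_pow_subgroup G "lcs G s" "sigma G \<delta> s"
proof (intro rat_pow_subgroup.intro rat_pow_subgroup_axioms.intro is_group subgroup_lcs)
  show "g \<otimes> h = h \<otimes> g" if "g \<in> lcs G s" "h \<in> lcs G s" for g h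
    using lcs_step_central[OF lcs_carrier[OF that(1)] that(2)] .
  show "a = b" if "a \<in> lcs G s" "b \<in> lcs G s" "(0::int) < k" "a [^] k = b [^] k" for a b k
    using lcs_step_int_pow_inj that by blast
qed (rule sigma_root)

lemma sigma_raw_well_defined:
  assumes z: "z \<in> lcs G s" and m: "(0::int) < m" and m': "0 < m'"
    and q: "(of_int n / of_int m :: rat) = of_int n' / of_int m'"
  shows "sigma_raw G \<delta> s n m z = sigma_raw G \<delta> s n' m' z"
proof -
  have r: "sigma_raw G \<delta> s n m z \<in> lcs G s" "sigma_raw G \<delta> s n m z [^] m = z [^] n"
    using sigma_raw_root[OF m z] by auto
  have r': "sigma_raw G \<delta> s n' m' z \<in> lcs G s" "sigma_raw G \<delta> s n' m' z [^] m' = z [^] n'"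
    using sigma_raw_root[OF m' z] by auto
  show ?thesis
  proof (rule lcs_step_int_pow_inj[OF r(1) r'(1)])
    show "0 < m * m'" using m m' by simp
    show "sigma_raw G \<delta> s n m z [^] (m * m') = sigma_raw G \<delta> s n' m' z [^] (m * m')"
      by (rule int_pow_eq_if_roots[OF lcs_carrier[OF z] lcs_carrier[OF r(1)] lcs_carrier[OF r'(1)]
            m m' q r(2) r'(2)])
  qed
qed

lemma sigma_commutator:
  assumes y: "y \<in> V1 G \<delta>" and w: "w \<in> lcs G (s - 1)"
  shows "sigma G \<delta> s q (commutator G y w) = commutator G (\<delta> q y) w"
proof -
  obtain n m where qo: "quotient_of q = (n, m)" by fastforce
  have m: "0 < m" and q: "q = of_int n / of_int m"
    using quotient_of_denom_pos[OF qo] quotient_of_div[OF qo] by auto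
  have s: "Suc (s - 1) = s" using step_pos by simp
  have c: "y \<in> carrier G" "w \<in> carrier G" using y w V1_carrier lcs_carrier by auto
  have in_step: "commutator G x w \<in> lcs G s" if "x \<in> carrier G" for x
    using commutator_in_lcs_Suc[OF that w] s by simp
  have "commutator G (\<delta> q y) w [^] m = commutator G (\<delta> q y [^] m) w"
    using commutator_int_pow_left[OF _ c(2) lcs_step_central[OF _ in_step]] c by simp
  also have "\<delta> q y [^] m = y [^] n"
    using V1_dilation_of_int[OF dilation_in_V1[OF y], of m, symmetric] V1_dilation_of_int[OF y, of n] c m
    by (simp add: dilation_dilation q)
  also have "commutator G (y [^] n) w = commutator G y w [^] n"
    using commutator_int_pow_left[OF c lcs_step_central[OF _ in_step]] c by simp
  finally show ?thesis
    using lcs_step.rat_pow_eqI[OF in_step in_step m q] c by simp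
qed

end

theorem mainTheorem5:
  fixes G :: "('a, 'b) monoid_scheme" and \<delta> :: "rat \<Rightarrow> 'a \<Rightarrow> 'a"
    and s r :: nat and x :: "nat \<Rightarrow> 'a"
  assumes "Q_scalable G \<delta>"
    and "nilpotent_step G s"
    and "\<forall>i \<in> {1..r}. x i \<in> V1 G \<delta>"
    and "generate G {\<delta> q (x i) | q i. i \<in> {1..r}} = carrier G"
  shows "comm_group (G\<lparr>carrier := lcs G s\<rparr>)
    \<and> (s \<ge> 2 \<longrightarrow> (\<forall>n m n' m'. \<forall>z \<in> lcs G s. m > 0 \<longrightarrow> m' > 0
          \<longrightarrow> (of_int n / of_int m :: rat) = of_int n' / of_int m'
          \<longrightarrow> sigma_raw G \<delta> s n m z = sigma_raw G \<delta> s n' m' z))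
    \<and> Q_vector_space_structure G (lcs G s) (sigma G \<delta> s)
    \<and> (s \<ge> 2 \<longrightarrow> (\<forall>y \<in> V1 G \<delta>. \<forall>w \<in> lcs G (s - 1).
          commutator G y w \<in> lcs G s \<longrightarrow>
          (\<forall>q. sigma G \<delta> s q (commutator G y w) = commutator G (\<delta> q y) w)))"
proof -
  have QSG: "Q_scalable_group G \<delta>"
    using assms(1) unfolding Q_scalable_group_def Q_scalable_group_axioms_def Q_scalable_def by blast
  then interpret nilpotent_Q_scalable_group G \<delta> "{\<delta> q (x i) | q i. i \<in> {1..r}}" s
    by (intro nilpotent_Q_scalable_group.intro generated_Q_scalable_group.intro
        generated_Q_scalable_group_axioms.intro nilpotent_Q_scalable_group_axioms.intro)
      (use assms(2-4) Q_scalable_group.dilation_in_V1[OF QSG] in auto)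
  show ?thesis
  proof (intro conjI impI allI ballI)
    fix n m n' m' :: int and z
    assume "z \<in> lcs G s" "0 < m" "0 < m'" "(of_int n / of_int m :: rat) = of_int n' / of_int m'"
    then show "sigma_raw G \<delta> s n m z = sigma_raw G \<delta> s n' m' z" by (rule sigma_raw_well_defined)
  next
    fix y w q assume "y \<in> V1 G \<delta>" "w \<in> lcs G (s - 1)"
    then show "sigma G \<delta> s q (commutator G y w) = commutator G (\<delta> q y) w" by (rule sigma_commutator)
  qed (rule comm_group_lcs_step, rule lcs_step.Q_vector_space_structure)
qed

end
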